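(* Let $X$ satisfy (P1) and (P2), let $\alpha$ be a saddle connection on $X$ which is neither a side nor a diagonal, and consider a maximal run of consecutive adjacent segments in the polygonal decomposition of $\alpha$. If two segments of this run lie in the same polygon and have the same sign, then the run contains an even number of segments.
   Context: $X$ is a translation surface obtained from finitely many Euclidean polygons by gluing pairs of parallel sides of equal length by translations, with (P1): each polygon convex with all angles obtuse or right; (P2): no two sides of the same polygon are identified. Saddle connection: straight segment between singularities (images of vertices) with none in its interior; a diagonal is a segment inside a polygon joining two non-adjacent vertices. Polygonal decomposition: cut $\alpha$ each time it passes from one polygon to another, giving consecutive (oriented) segments $\alpha_1,\dots,\alpha_k$, each in one polygon. A segment in polygon $P$ is adjacent if it goes from the relative interior of a side $e$ of $P$ to the relative interior of a side adjacent to $e$; otherwise non-adjacent. Labeling the sides of each polygon $P$ in cyclic clockwise order $e_1,\dots,e_N$, an adjacent segment in $P$ has positive sign if it goes from some $e_u$ to $e_{u+1}$ and negative sign if it goes from $e_u$ to $e_{u-1}$. *)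

theory Defs
  imports "HOL-Analysis.Analysis"
begin

text \<open>Polygons are lists of vertices in the plane (complex numbers) in clockwise
cyclic order; side u of polygon vs goes from vertex u to vertex u+1 (mod N).\<close>

definition cross :: "complex \<Rightarrow> complex \<Rightarrow> real" where
  "cross a b = Im (cnj a * b)"

definition dotc :: "complex \<Rightarrow> complex \<Rightarrow> real" where
  "dotc a b = Re (cnj a * b)"

definition vtx :: "complex list \<Rightarrow> nat \<Rightarrow> complex" where
  "vtx vs u = vs ! (u mod length vs)"

definition edge :: "complex list \<Rightarrow> nat \<Rightarrow> complex" where
  "edge vs u = vtx vs (Suc u) - vtx vs u"

text \<open>Strictly convex polygon, vertices in clockwise order (interior on the right
of every directed side).\<close>
definition convex_cw_polygon :: "complex list \<Rightarrow> bool" where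
  "convex_cw_polygon vs \<longleftrightarrow> length vs \<ge> 3 \<and>
     (\<forall>u < length vs. \<forall>w < length vs. w \<noteq> u \<and> w \<noteq> Suc u mod length vs \<longrightarrow>
        cross (edge vs u) (vs ! w - vtx vs u) < 0)"

text \<open>All interior angles are obtuse or right (at least pi/2).\<close>
definition angles_obtuse_or_right :: "complex list \<Rightarrow> bool" where
  "angles_obtuse_or_right vs \<longleftrightarrow>
     (\<forall>u < length vs. dotc (vtx vs (u + length vs - 1) - vs ! u) (vtx vs (Suc u) - vs ! u) \<le> 0)"

definition poly_interior :: "complex list \<Rightarrow> complex set" where
  "poly_interior vs = {z. \<forall>u < length vs. cross (edge vs u) (z - vtx vs u) < 0}"

definition open_side :: "complex list \<Rightarrow> nat \<Rightarrow> complex set" where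
  "open_side vs u = open_segment (vtx vs u) (vtx vs (Suc u))"

definition is_side_idx :: "complex list list \<Rightarrow> nat \<times> nat \<Rightarrow> bool" where
  "is_side_idx polys s \<longleftrightarrow> fst s < length polys \<and> snd s < length (polys ! fst s)"

text \<open>Translation surface from polygons satisfying (P1) and (P2): every side is glued
to exactly one other side (glue is a fixed-point free involution on sides), glued sides
are parallel of equal length with opposite boundary orientation (gluing by translation),
and (P2) glued sides belong to different polygons.\<close>
definition translation_surface_P1P2 :: "complex list list \<Rightarrow> (nat \<times> nat \<Rightarrow> nat \<times> nat) \<Rightarrow> bool" where
  "translation_surface_P1P2 polys glue \<longleftrightarrow>
     polys \<noteq> [] \<and>
     (\<forall>P \<in> set polys. convex_cw_polygon P \<and> angles_obtuse_or_right P) \<and>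
     (\<forall>s. is_side_idx polys s \<longrightarrow>
        is_side_idx polys (glue s) \<and> glue (glue s) = s \<and> glue s \<noteq> s \<and>
        fst (glue s) \<noteq> fst s \<and>
        edge (polys ! fst (glue s)) (snd (glue s)) = - edge (polys ! fst s) (snd s))"

text \<open>The translation carrying side s onto its partner glue s
(vertex u goes to vertex j+1, vertex u+1 goes to vertex j).\<close>
definition glue_map :: "complex list list \<Rightarrow> (nat \<times> nat \<Rightarrow> nat \<times> nat) \<Rightarrow> nat \<times> nat \<Rightarrow> complex \<Rightarrow> complex" where
  "glue_map polys glue s z =
     z - vtx (polys ! fst s) (snd s) + vtx (polys ! fst (glue s)) (Suc (snd (glue s)))"

definition is_vertex :: "complex list \<Rightarrow> complex \<Rightarrow> bool" where
  "is_vertex vs z \<longleftrightarrow> z \<in> set vs"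

text \<open>A segment is a triple (polygon index, start point, end point).
A saddle connection which is not a side is given by its polygonal decomposition
alpha_1,...,alpha_k: straight segments in polygons, all of the same direction,
whose open interiors lie in the polygon interiors, starting and ending at vertices,
where each intermediate endpoint lies in the relative interior of a side and the
next segment starts at the glued point of the partner side.\<close>
definition transversal_saddle_connection ::
  "complex list list \<Rightarrow> (nat \<times> nat \<Rightarrow> nat \<times> nat) \<Rightarrow> (nat \<times> complex \<times> complex) list \<Rightarrow> bool" where
  "transversal_saddle_connection polys glue segs \<longleftrightarrow>
     segs \<noteq> [] \<and>
     (\<forall>i < length segs. fst (segs ! i) < length polys \<and>
        fst (snd (segs ! i)) \<noteq> snd (snd (segs ! i)) \<and>
        open_segment (fst (snd (segs ! i))) (snd (snd (segs ! i)))
          \<subseteq> poly_interior (polys ! fst (segs ! i))) \<and>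
     is_vertex (polys ! fst (hd segs)) (fst (snd (hd segs))) \<and>
     is_vertex (polys ! fst (last segs)) (snd (snd (last segs))) \<and>
     (\<forall>i. Suc i < length segs \<longrightarrow>
        (let (p, a, b) = segs ! i; (q, a', b') = segs ! Suc i in
          (\<exists>c > 0. b' - a' = of_real c * (b - a)) \<and>
          (\<exists>u < length (polys ! p). b \<in> open_side (polys ! p) u \<and>
              fst (glue (p, u)) = q \<and> a' = glue_map polys glue (p, u) b)))"

definition is_side :: "complex list list \<Rightarrow> (nat \<times> complex \<times> complex) list \<Rightarrow> bool" where
  "is_side polys segs \<longleftrightarrow> length segs = 1 \<and>
     (let (p, a, b) = hd segs in p < length polys \<and>
        (\<exists>u < length (polys ! p).
           (a = vtx (polys ! p) u \<and> b = vtx (polys ! p) (Suc u)) \<or>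
           (b = vtx (polys ! p) u \<and> a = vtx (polys ! p) (Suc u))))"

definition saddle_connection ::
  "complex list list \<Rightarrow> (nat \<times> nat \<Rightarrow> nat \<times> nat) \<Rightarrow> (nat \<times> complex \<times> complex) list \<Rightarrow> bool" where
  "saddle_connection polys glue segs \<longleftrightarrow>
     transversal_saddle_connection polys glue segs \<or> is_side polys segs"

definition is_diagonal :: "complex list list \<Rightarrow> (nat \<times> complex \<times> complex) list \<Rightarrow> bool" where
  "is_diagonal polys segs \<longleftrightarrow> length segs = 1 \<and>
     (let (p, a, b) = hd segs in p < length polys \<and>
        (\<exists>u < length (polys ! p). \<exists>w < length (polys ! p).
           a = polys ! p ! u \<and> b = polys ! p ! w \<and> w \<noteq> u \<and>
           w \<noteq> Suc u mod length (polys ! p) \<and> u \<noteq> Suc w mod length (polys ! p)))"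

definition adj_pos :: "complex list list \<Rightarrow> (nat \<times> complex \<times> complex) list \<Rightarrow> nat \<Rightarrow> bool" where
  "adj_pos polys segs i \<longleftrightarrow> i < length segs \<and>
     (let (p, a, b) = segs ! i; N = length (polys ! p) in
       \<exists>u < N. a \<in> open_side (polys ! p) u \<and> b \<in> open_side (polys ! p) (Suc u mod N))"

definition adj_neg :: "complex list list \<Rightarrow> (nat \<times> complex \<times> complex) list \<Rightarrow> nat \<Rightarrow> bool" where
  "adj_neg polys segs i \<longleftrightarrow> i < length segs \<and>
     (let (p, a, b) = segs ! i; N = length (polys ! p) in
       \<exists>u < N. a \<in> open_side (polys ! p) u \<and> b \<in> open_side (polys ! p) ((u + N - 1) mod N))"

definition adjacent_seg :: "complex list list \<Rightarrow> (nat \<times> complex \<times> complex) list \<Rightarrow> nat \<Rightarrow> bool" where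
  "adjacent_seg polys segs i \<longleftrightarrow> adj_pos polys segs i \<or> adj_neg polys segs i"

text \<open>Indices i..j (0-based, inclusive) form a maximal run of consecutive adjacent segments.\<close>
definition maximal_adjacent_run :: "complex list list \<Rightarrow> (nat \<times> complex \<times> complex) list \<Rightarrow> nat \<Rightarrow> nat \<Rightarrow> bool" where
  "maximal_adjacent_run polys segs i j \<longleftrightarrow>
     i \<le> j \<and> j < length segs \<and>
     (\<forall>m \<in> {i..j}. adjacent_seg polys segs m) \<and>
     (i = 0 \<or> \<not> adjacent_seg polys segs (i - 1)) \<and>
     (Suc j = length segs \<or> \<not> adjacent_seg polys segs (Suc j))"

end

theory Submission
  imports Defs
begin

text \<open>Consecutive adjacent segments turn in opposite senses: two consecutive turns in
the same sense would cross two right or obtuse corners sharing a side, which no single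
direction can do. So two segments of the run with the same sign lie an even distance k
apart. If they also lie in the same polygon, the direction forces them through the same
corner, and because gluings only depend on the sides crossed, the whole run is k-periodic
up to a constant transverse shift D of the carrying lines. Just after the run, a segment
enters the polygon through the same side as the segment k steps earlier but misses its
corner; convexity then fixes the sign of D by the sign of that earlier segment. The same
happens just before the run, and the two earlier segments involved turn out to have
opposite signs, which makes the length of the run even.\<close>

section \<open>Convex polygons\<close>

lemma cross_eq: "cross a b = Re a * Im b - Im a * Re b"
  by (simp add: cross_def)

lemma dotc_eq: "dotc a b = Re a * Re b + Im a * Im b"
  by (simp add: dotc_def)

lemma cross_add_right: "cross a (b + c) = cross a b + cross a c"
  by (simp add: cross_eq algebra_simps)

lemma cross_diff_right: "cross a (b - c) = cross a b - cross a c"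
  by (simp add: cross_eq algebra_simps)

lemma cross_of_real_mult_right: "cross a (of_real s * b) = s * cross a b"
  by (simp add: cross_eq algebra_simps)

lemma cross_minus_right: "cross a (- b) = - cross a b"
  by (simp add: cross_eq)

lemma cross_minus_left: "cross (- a) b = - cross a b"
  by (simp add: cross_eq)

lemma cross_self [simp]: "cross a a = 0"
  by (simp add: cross_eq)

lemma cross_antisym: "cross a b = - cross b a"
  by (simp add: cross_eq)

lemma cross_eq_0_imp_parallel:
  assumes "D \<noteq> 0" "cross D Z = 0"
  shows "\<exists>\<mu>. Z = of_real \<mu> * D"
proof -
  have "Im (Z / D) = 0"
    using assms by (simp add: cross_eq Im_divide field_simps)
  hence "Z / D = of_real (Re (Z / D))" by (simp add: complex_eq_iff)
  hence "Z = of_real (Re (Z / D)) * D" using assms(1) by (simp add: field_simps)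
  thus ?thesis by blast
qed

lemma convex_comb_neg:
  fixes s c1 c2 :: real
  assumes "0 < s" "s < 1" "c1 \<le> 0" "c2 \<le> 0" "c1 < 0 \<or> c2 < 0"
  shows "(1 - s) * c1 + s * c2 < 0"
proof -
  have "(1 - s) * c1 \<le> 0" "s * c2 \<le> 0" using assms by (auto simp: mult_nonneg_nonpos)
  moreover have "(1 - s) * c1 < 0 \<or> s * c2 < 0" using assms by (auto simp: mult_pos_neg)
  ultimately show ?thesis by linarith
qed

lemma mod_less_double: "m < 2 * n \<Longrightarrow> m mod (n::nat) = (if m < n then m else m - n)"
  by (simp add: mod_if le_mod_geq)

lemma Suc_mod_inj:
  assumes "u < n" "w < n" "Suc u mod n = Suc w mod n"
  shows "u = w"
  using assms by (auto simp: mod_less_double split: if_splits)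

lemma Suc_mod_pred:
  assumes "u < (n::nat)"
  shows "Suc ((u + n - 1) mod n) mod n = u"
  using assms by (cases u) (auto simp: mod_less_double mod_Suc_eq)

lemma mod_pred_Suc_mod:
  assumes "x < (n::nat)"
  shows "(Suc x mod n + n - 1) mod n = x"
  using assms by (cases "Suc x = n") (auto simp: mod_less_double)

lemma Suc_Suc_mod_neq:
  assumes "3 \<le> n" "u < n"
  shows "Suc u mod n \<noteq> u" "Suc (Suc u) mod n \<noteq> u" "Suc (Suc u) mod n \<noteq> Suc u mod n"
  using assms by (auto simp: mod_less_double)

lemma vtx_mod: "vtx vs (k mod length vs) = vtx vs k"
  by (simp add: vtx_def)

lemma vtx_Suc_mod: "vtx vs (Suc (k mod length vs)) = vtx vs (Suc k)"
  by (simp add: vtx_def mod_Suc_eq)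

lemma edge_mod: "edge vs (k mod length vs) = edge vs k"
  by (simp add: edge_def vtx_mod vtx_Suc_mod)

lemma nth_eq_vtx: "w < length vs \<Longrightarrow> vs ! w = vtx vs w"
  by (simp add: vtx_def)

lemma convex_cw_polygon_length: "convex_cw_polygon vs \<Longrightarrow> 3 \<le> length vs"
  by (simp add: convex_cw_polygon_def)

lemma convex_cw_vertex_right:
  assumes "convex_cw_polygon vs" "u < length vs" "w < length vs" "w \<noteq> u" "w \<noteq> Suc u mod length vs"
  shows "cross (edge vs u) (vtx vs w - vtx vs u) < 0"
  using assms unfolding convex_cw_polygon_def by (metis nth_eq_vtx)

lemma convex_cw_vertex_right_le:
  assumes "convex_cw_polygon vs" "u < length vs" "w < length vs"
  shows "cross (edge vs u) (vtx vs w - vtx vs u) \<le> 0"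
proof (cases "w = u \<or> w = Suc u mod length vs")
  case True
  then show ?thesis
  proof
    assume "w = Suc u mod length vs"
    hence "vtx vs w = vtx vs (Suc u)" by (simp add: vtx_mod)
    thus ?thesis by (simp add: edge_def[symmetric])
  qed (simp add: cross_eq)
next
  case False
  then show ?thesis using convex_cw_vertex_right[OF assms] by auto
qed

lemma convex_turn_right:
  assumes "convex_cw_polygon vs" "u < length vs"
  shows "cross (edge vs u) (edge vs (Suc u)) < 0"
proof -
  let ?N = "length vs"
  have N3: "3 \<le> ?N" using assms(1) convex_cw_polygon_length by auto
  define w where "w = Suc (Suc u) mod ?N"
  have "w < ?N" unfolding w_def using N3 by (intro mod_less_divisor) linarith
  moreover have "w \<noteq> u" "w \<noteq> Suc u mod ?N" using Suc_Suc_mod_neq[OF N3 assms(2)] w_def by auto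
  ultimately have "cross (edge vs u) (vtx vs w - vtx vs u) < 0"
    using convex_cw_vertex_right[OF assms] by auto
  moreover have "vtx vs w = vtx vs (Suc (Suc u))" unfolding w_def by (metis vtx_mod)
  ultimately show ?thesis by (simp add: edge_def cross_eq algebra_simps)
qed

lemma obtuse_turn:
  assumes "convex_cw_polygon vs" "angles_obtuse_or_right vs" "u < length vs"
  shows "0 \<le> dotc (edge vs u) (edge vs (Suc u))"
proof -
  let ?N = "length vs"
  have N3: "3 \<le> ?N" using assms(1) convex_cw_polygon_length by auto
  define x where "x = Suc u mod ?N"
  have xN: "x < ?N" unfolding x_def using N3 by (intro mod_less_divisor) linarith
  have "dotc (vtx vs (x + ?N - 1) - vs ! x) (vtx vs (Suc x) - vs ! x) \<le> 0"
    using assms(2) xN unfolding angles_obtuse_or_right_def by blast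
  moreover have "(x + ?N - 1) mod ?N = u"
    using assms(3) N3 unfolding x_def by (auto simp: mod_less_double)
  hence "vtx vs (x + ?N - 1) = vtx vs u" by (metis vtx_mod)
  moreover have "vs ! x = vtx vs (Suc u)" using xN by (simp add: nth_eq_vtx x_def vtx_mod)
  moreover have "vtx vs (Suc x) = vtx vs (Suc (Suc u))" unfolding x_def by (metis vtx_Suc_mod)
  ultimately show ?thesis by (simp add: edge_def dotc_eq algebra_simps)
qed

lemma open_side_param:
  assumes "z \<in> open_side vs w"
  obtains s where "0 < s" "s < 1" "z = vtx vs w + of_real s * edge vs w" "edge vs w \<noteq> 0"
proof -
  from assms obtain s where "vtx vs w \<noteq> vtx vs (Suc w)" "0 < s" "s < 1"
    "z = (1 - s) *\<^sub>R vtx vs w + s *\<^sub>R vtx vs (Suc w)"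
    unfolding open_side_def in_segment(2) by blast
  then show ?thesis
    by (intro that[of s]) (auto simp: edge_def scaleR_conv_of_real algebra_simps)
qed

lemma open_side_on_line: "z \<in> open_side vs w \<Longrightarrow> cross (edge vs w) (z - vtx vs w) = 0"
  by (erule open_side_param) (simp add: cross_of_real_mult_right)

lemma open_side_right_of_sides:
  assumes cv: "convex_cw_polygon vs" and uN: "u < length vs" and wN: "w < length vs"
    and z: "z \<in> open_side vs w"
  shows "cross (edge vs u) (z - vtx vs u) \<le> 0"
    and "u \<noteq> w \<Longrightarrow> cross (edge vs u) (z - vtx vs u) < 0"
proof -
  let ?N = "length vs"
  have N3: "3 \<le> ?N" using cv convex_cw_polygon_length by auto
  obtain s where s: "0 < s" "s < 1" "z = vtx vs w + of_real s * edge vs w"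
    using open_side_param[OF z] by blast
  define w' where "w' = Suc w mod ?N"
  have w'N: "w' < ?N" unfolding w'_def using N3 by (intro mod_less_divisor) linarith
  have eq: "cross (edge vs u) (z - vtx vs u) =
      (1 - s) * cross (edge vs u) (vtx vs w - vtx vs u) + s * cross (edge vs u) (vtx vs w' - vtx vs u)"
    by (simp add: s(3) w'_def vtx_mod edge_def cross_eq algebra_simps)
  have c1: "cross (edge vs u) (vtx vs w - vtx vs u) \<le> 0"
    using convex_cw_vertex_right_le[OF cv uN wN] .
  have c2: "cross (edge vs u) (vtx vs w' - vtx vs u) \<le> 0"
    using convex_cw_vertex_right_le[OF cv uN w'N] .
  show "cross (edge vs u) (z - vtx vs u) \<le> 0"
    unfolding eq using c1 c2 s by (smt (verit) mult_nonneg_nonpos)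
  assume "u \<noteq> w"
  have "cross (edge vs u) (vtx vs w - vtx vs u) < 0 \<or> cross (edge vs u) (vtx vs w' - vtx vs u) < 0"
  proof (cases "w = Suc u mod ?N")
    case True
    have "w' \<noteq> u" using Suc_Suc_mod_neq(2)[OF N3 uN] True w'_def by (simp add: mod_Suc_eq)
    moreover have "w' \<noteq> Suc u mod ?N" using Suc_mod_inj[OF wN uN] \<open>u \<noteq> w\<close> w'_def by auto
    ultimately show ?thesis using convex_cw_vertex_right[OF cv uN w'N] by auto
  next
    case False
    then show ?thesis using convex_cw_vertex_right[OF cv uN wN] \<open>u \<noteq> w\<close> by auto
  qed
  then show "cross (edge vs u) (z - vtx vs u) < 0"
    unfolding eq using convex_comb_neg[OF s(1,2) c1 c2] by blast
qed

lemma open_side_unique: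
  assumes "convex_cw_polygon vs" "u < length vs" "w < length vs"
    "z \<in> open_side vs u" "z \<in> open_side vs w"
  shows "u = w"
  using open_side_right_of_sides(2)[OF assms(1,2,3,5)] open_side_on_line[OF assms(4)] by force

lemma open_side_not_vertex:
  assumes cv: "convex_cw_polygon vs" and wN: "w < length vs"
    and z: "z \<in> open_side vs w" "z \<in> set vs"
  shows False
proof -
  obtain k where k: "k < length vs" "z = vtx vs k"
    using z(2) by (metis in_set_conv_nth nth_eq_vtx)
  obtain s where s: "0 < s" "s < 1" "z = vtx vs w + of_real s * edge vs w" "edge vs w \<noteq> 0"
    using open_side_param[OF z(1)] by blast
  consider "k = w" | "k = Suc w mod length vs" | "k \<noteq> w" "k \<noteq> Suc w mod length vs"
    by blast
  then show False
  proof cases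
    case 1
    then show False using k s by simp
  next
    case 2
    hence "vtx vs k = vtx vs w + edge vs w" by (simp add: vtx_mod edge_def)
    hence "of_real (1 - s) * edge vs w = 0" using k s by (simp add: algebra_simps)
    thus False using s by simp
  next
    case 3
    then show False
      using convex_cw_vertex_right[OF cv wN k(1)] open_side_on_line[OF z(1)] k by simp
  qed
qed

definition on_boundary :: "complex list \<Rightarrow> complex \<Rightarrow> bool" where
  "on_boundary vs z \<longleftrightarrow> z \<in> set vs \<or> (\<exists>w < length vs. z \<in> open_side vs w)"

lemma poly_interior_not_on_boundary:
  assumes "z \<in> poly_interior vs"
  shows "\<not> on_boundary vs z"
proof
  assume "on_boundary vs z"
  then consider k where "k < length vs" "z = vtx vs k" | w where "w < length vs" "z \<in> open_side vs w"
    unfolding on_boundary_def by (metis in_set_conv_nth nth_eq_vtx)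
  then show False
  proof cases
    case 1
    then show False using assms unfolding poly_interior_def by (auto simp: cross_eq)
  next
    case 2
    then show False using assms open_side_on_line unfolding poly_interior_def by fastforce
  qed
qed

lemma open_side_level_between:
  assumes "z \<in> open_side vs w"
  shows "cross (edge vs w) d < 0 \<Longrightarrow> cross d (vtx vs w) < cross d z \<and> cross d z < cross d (vtx vs (Suc w))"
    and "cross (edge vs w) d > 0 \<Longrightarrow> cross d (vtx vs (Suc w)) < cross d z \<and> cross d z < cross d (vtx vs w)"
proof -
  obtain s where s: "0 < s" "s < 1" "z = vtx vs w + of_real s * edge vs w"
    using open_side_param[OF assms] by blast
  have z: "cross d z = cross d (vtx vs w) + s * cross d (edge vs w)"
    using s(3) by (simp add: cross_add_right cross_of_real_mult_right)
  have w: "cross d (vtx vs (Suc w)) = cross d (vtx vs w) + cross d (edge vs w)"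
    by (simp add: edge_def cross_diff_right)
  have "0 < cross d (edge vs w) \<Longrightarrow> 0 < s * cross d (edge vs w) \<and> s * cross d (edge vs w) < cross d (edge vs w)"
    "cross d (edge vs w) < 0 \<Longrightarrow> cross d (edge vs w) < s * cross d (edge vs w) \<and> s * cross d (edge vs w) < 0"
    using s(1,2) by (auto simp: mult_less_cancel_right2 mult_less_cancel_right1 mult_pos_neg)
  then show "cross (edge vs w) d < 0 \<Longrightarrow> cross d (vtx vs w) < cross d z \<and> cross d z < cross d (vtx vs (Suc w))"
    and "cross (edge vs w) d > 0 \<Longrightarrow> cross d (vtx vs (Suc w)) < cross d z \<and> cross d z < cross d (vtx vs w)"
    using z w cross_antisym[of "edge vs w" d] by auto
qed

lemma cross_half_right: "cross a (b / 2) = cross a b / 2"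
  by (simp add: cross_eq)

lemma entry_cross_neg:
  assumes "a \<noteq> b" "open_segment a b \<subseteq> poly_interior vs"
    "u < length vs" "a \<in> open_side vs u"
  shows "cross (edge vs u) (b - a) < 0"
proof -
  have "midpoint a b \<in> poly_interior vs" using assms(1,2) by auto
  hence "cross (edge vs u) (midpoint a b - vtx vs u) < 0"
    using assms(3) unfolding poly_interior_def by auto
  moreover have "midpoint a b - vtx vs u = (a - vtx vs u) + (b - a) / 2"
    by (simp add: midpoint_def scaleR_conv_of_real complex_eq_iff field_simps)
  ultimately show ?thesis
    using open_side_on_line[OF assms(4)] by (simp add: cross_add_right cross_diff_right cross_half_right)
qed

lemma exit_cross_pos:
  assumes "a \<noteq> b" "open_segment a b \<subseteq> poly_interior vs"
    "x < length vs" "b \<in> open_side vs x"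
  shows "cross (edge vs x) (b - a) > 0"
proof -
  have "midpoint a b \<in> poly_interior vs" using assms(1,2) by auto
  hence "cross (edge vs x) (midpoint a b - vtx vs x) < 0"
    using assms(3) unfolding poly_interior_def by auto
  moreover have "midpoint a b - vtx vs x = (b - vtx vs x) - (b - a) / 2"
    by (simp add: midpoint_def scaleR_conv_of_real complex_eq_iff field_simps)
  ultimately show ?thesis
    using open_side_on_line[OF assms(4)] by (simp add: cross_add_right cross_diff_right cross_half_right)
qed

lemma line_crosses_open_side:
  assumes sep: "(cross d (vtx vs x) - l) * (cross d (vtx vs (Suc x)) - l) < 0"
  obtains p where "p \<in> open_side vs x" "cross d p = l"
proof -
  define al where "al = cross d (vtx vs x) - l"
  define be where "be = cross d (vtx vs (Suc x)) - l"
  have ne: "al \<noteq> be" using sep by (auto simp: al_def be_def)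
  define s where "s = al / (al - be)"
  have s: "0 < s" "s < 1"
    using sep ne unfolding s_def al_def be_def
    by (auto simp: mult_less_0_iff zero_less_divide_iff divide_less_eq)
  define p where "p = vtx vs x + of_real s * edge vs x"
  have "cross d p - l = al + s * (be - al)"
    unfolding p_def al_def be_def edge_def by (simp add: cross_eq algebra_simps)
  also have "\<dots> = 0" unfolding s_def using ne by (simp add: field_simps)
  finally have "cross d p = l" by simp
  moreover have "vtx vs x \<noteq> vtx vs (Suc x)" using ne al_def be_def by auto
  hence "p \<in> open_side vs x"
    unfolding open_side_def in_segment(2) using s
    by (intro conjI exI[of _ s]) (auto simp: p_def edge_def scaleR_conv_of_real algebra_simps)
  ultimately show ?thesis using that by blast
qed

lemma chord_in_poly_interior:
  assumes cv: "convex_cw_polygon vs" and uN: "u < length vs" and xN: "x < length vs"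
    and xu: "x \<noteq> u" and a: "a \<in> open_side vs u" and p: "p \<in> open_side vs x"
  shows "open_segment a p \<subseteq> poly_interior vs"
proof
  fix z assume "z \<in> open_segment a p"
  then obtain r where r: "0 < r" "r < 1" and z: "z = a + of_real r * (p - a)"
    unfolding in_segment(2) by (auto simp: scaleR_conv_of_real algebra_simps)
  show "z \<in> poly_interior vs"
    unfolding poly_interior_def
  proof (intro CollectI allI impI)
    fix y assume yN: "y < length vs"
    have "cross (edge vs y) (z - vtx vs y) =
      (1 - r) * cross (edge vs y) (a - vtx vs y) + r * cross (edge vs y) (p - vtx vs y)"
      unfolding z by (simp add: cross_eq algebra_simps)
    moreover have "cross (edge vs y) (a - vtx vs y) < 0 \<or> cross (edge vs y) (p - vtx vs y) < 0"
      using open_side_right_of_sides(2)[OF cv yN uN a] open_side_right_of_sides(2)[OF cv yN xN p] xu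
      by blast
    ultimately show "cross (edge vs y) (z - vtx vs y) < 0"
      using convex_comb_neg[OF r] open_side_right_of_sides(1)[OF cv yN uN a]
        open_side_right_of_sides(1)[OF cv yN xN p] by simp
  qed
qed

lemma line_meets_other_side_ahead:
  assumes cv: "convex_cw_polygon vs" and ab: "a \<noteq> b"
    and seg: "open_segment a b \<subseteq> poly_interior vs"
    and uN: "u < length vs" and au: "a \<in> open_side vs u" and xN: "x < length vs" and xu: "x \<noteq> u"
    and px: "p \<in> open_side vs x" and line: "cross (b - a) (p - a) = 0"
  obtains \<mu> where "0 < \<mu>" "p - a = of_real \<mu> * (b - a)"
proof -
  from ab line obtain \<mu> where \<mu>: "p - a = of_real \<mu> * (b - a)"
    using cross_eq_0_imp_parallel[of "b - a" "p - a"] by auto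
  have "cross (edge vs u) (p - vtx vs u) < 0"
    using open_side_right_of_sides(2)[OF cv uN xN px] xu by simp
  moreover have "p - vtx vs u = (a - vtx vs u) + of_real \<mu> * (b - a)"
    using \<mu> by (simp add: algebra_simps)
  moreover have "cross (edge vs u) (b - a) < 0"
    using entry_cross_neg[OF ab seg uN au] .
  ultimately have "0 < \<mu>"
    using open_side_on_line[OF au]
    by (simp add: cross_add_right cross_of_real_mult_right mult_less_0_iff)
  with \<mu> show ?thesis using that by blast
qed

lemma exit_side_forced:
  assumes cv: "convex_cw_polygon vs" and ab: "a \<noteq> b"
    and seg: "open_segment a b \<subseteq> poly_interior vs"
    and uN: "u < length vs" and au: "a \<in> open_side vs u" and xN: "x < length vs" and xu: "x \<noteq> u"
    and bd: "on_boundary vs b"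
    and dir: "b - a = of_real c * d" "0 < c"
    and sep: "(cross d (vtx vs x) - cross d a) * (cross d (vtx vs (Suc x)) - cross d a) < 0"
  shows "b \<in> open_side vs x"
proof -
  obtain p where px: "p \<in> open_side vs x" and "cross d p = cross d a"
    using line_crosses_open_side[OF sep] by blast
  moreover have "cross (b - a) (p - a) = c * (cross d p - cross d a)"
    using dir by (simp add: cross_eq algebra_simps)
  ultimately have "cross (b - a) (p - a) = 0" by simp
  then obtain \<mu> where \<mu>0: "0 < \<mu>" and \<mu>: "p - a = of_real \<mu> * (b - a)"
    using line_meets_other_side_ahead[OF cv ab seg uN au xN xu px] by blast
  consider "\<mu> < 1" | "\<mu> = 1" | "1 < \<mu>" by linarith
  then show ?thesis
  proof cases
    case 1
    have "p \<in> open_segment a b"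
      unfolding in_segment(2) using ab \<mu>0 1 \<mu>
      by (intro conjI exI[of _ \<mu>]) (auto simp: scaleR_conv_of_real algebra_simps)
    then show ?thesis
      using seg poly_interior_not_on_boundary xN px unfolding on_boundary_def by blast
  next
    case 2
    then show ?thesis using \<mu> px by simp
  next
    case 3
    have "a \<noteq> p" using \<mu> \<mu>0 ab by auto
    moreover have "b = (1 - 1 / \<mu>) *\<^sub>R a + (1 / \<mu>) *\<^sub>R p"
      using \<mu> 3 by (simp add: scaleR_conv_of_real field_simps)
    ultimately have "b \<in> open_segment a p"
      unfolding in_segment(2) using 3 by (intro conjI exI[of _ "1 / \<mu>"]) auto
    then show ?thesis
      using chord_in_poly_interior[OF cv uN xN xu au px] bd poly_interior_not_on_boundary by blast
  qed
qed

text \<open>The line of a segment that enters through side u but does not leave through the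
neighbouring side x must pass beyond the vertex shared by u and x, hence beyond every line
of the same direction that crosses side x.\<close>

lemma corner_miss_below:
  assumes cv: "convex_cw_polygon vs" and uN: "u < length vs" and x: "Suc u mod length vs = x"
    and din: "cross (edge vs u) d < 0" and dout: "cross (edge vs x) d > 0"
    and b0: "b0 \<in> open_side vs x"
    and ab: "a \<noteq> b" and seg: "open_segment a b \<subseteq> poly_interior vs"
    and a: "a \<in> open_side vs u" and bd: "on_boundary vs b" and nb: "b \<notin> open_side vs x"
    and dir: "b - a = of_real c * d" "0 < c"
  shows "cross d a < cross d b0"
proof -
  have N3: "3 \<le> length vs" using cv convex_cw_polygon_length by blast
  have xN: "x < length vs" unfolding x[symmetric] using N3 by (intro mod_less_divisor) linarith
  have xu: "x \<noteq> u" using Suc_Suc_mod_neq(1)[OF N3 uN] x by simp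
  have "vtx vs x = vtx vs (Suc u)" using x by (metis vtx_mod)
  hence "cross d a < cross d (vtx vs x)"
    using open_side_level_between(1)[OF a din] by simp
  moreover have "\<not> (cross d (vtx vs x) - cross d a) * (cross d (vtx vs (Suc x)) - cross d a) < 0"
    using exit_side_forced[OF cv ab seg uN a xN xu bd dir] nb by blast
  ultimately have "cross d a \<le> cross d (vtx vs (Suc x))"
    by (smt (verit) mult_pos_neg)
  then show ?thesis using open_side_level_between(2)[OF b0 dout] by linarith
qed

lemma corner_miss_above:
  assumes cv: "convex_cw_polygon vs" and uN: "u < length vs" and xN: "x < length vs"
    and x: "Suc x mod length vs = u"
    and din: "cross (edge vs u) d < 0" and dout: "cross (edge vs x) d > 0"
    and b0: "b0 \<in> open_side vs x"
    and ab: "a \<noteq> b" and seg: "open_segment a b \<subseteq> poly_interior vs"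
    and a: "a \<in> open_side vs u" and bd: "on_boundary vs b" and nb: "b \<notin> open_side vs x"
    and dir: "b - a = of_real c * d" "0 < c"
  shows "cross d b0 < cross d a"
proof -
  have N3: "3 \<le> length vs" using cv convex_cw_polygon_length by blast
  have xu: "x \<noteq> u" using Suc_Suc_mod_neq(1)[OF N3 xN] x by simp
  have "vtx vs (Suc x) = vtx vs u" using x by (metis vtx_mod)
  hence "cross d (vtx vs (Suc x)) < cross d a"
    using open_side_level_between(1)[OF a din] by simp
  moreover have "\<not> (cross d (vtx vs x) - cross d a) * (cross d (vtx vs (Suc x)) - cross d a) < 0"
    using exit_side_forced[OF cv ab seg uN a xN xu bd dir] nb by blast
  ultimately have "cross d (vtx vs x) \<le> cross d a"
    by (smt (verit) mult_pos_neg)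
  then show ?thesis using open_side_level_between(2)[OF b0 dout] by linarith
qed

lemma vertex_strictly_right_of_corner:
  assumes cv: "convex_cw_polygon vs" and uN: "u < length vs" and kN: "k < length vs"
    and k: "k \<noteq> Suc u mod length vs"
  shows "cross (edge vs u) (vtx vs k - vtx vs u) < 0 \<or>
    cross (edge vs (Suc u)) (vtx vs k - vtx vs (Suc u)) < 0"
proof (cases "k = u")
  case True
  let ?N = "length vs"
  have N3: "3 \<le> ?N" using cv convex_cw_polygon_length by auto
  define u1 where "u1 = Suc u mod ?N"
  have u1N: "u1 < ?N" unfolding u1_def using N3 by (intro mod_less_divisor) linarith
  have "k \<noteq> Suc u1 mod ?N"
    using Suc_Suc_mod_neq(2)[OF N3 uN] True u1_def by (simp add: mod_Suc_eq)
  hence "cross (edge vs u1) (vtx vs k - vtx vs u1) < 0"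
    using convex_cw_vertex_right[OF cv u1N kN] k u1_def by auto
  then show ?thesis unfolding u1_def by (metis edge_mod vtx_mod)
next
  case False
  then show ?thesis using convex_cw_vertex_right[OF cv uN kN] k by auto
qed

lemma vertex_left_of_corner_direction:
  assumes cv: "convex_cw_polygon vs" and uN: "u < length vs" and kN: "k < length vs"
    and k: "k \<noteq> Suc u mod length vs"
    and din: "cross (edge vs u) d < 0" and dout: "cross (edge vs (Suc u)) d > 0"
  shows "cross d (vtx vs k - vtx vs (Suc u)) < 0"
proof -
  define A where "A = edge vs u"
  define B where "B = edge vs (Suc u)"
  define Z where "Z = vtx vs k - vtx vs (Suc u)"
  have AZ_eq: "cross A Z = cross (edge vs u) (vtx vs k - vtx vs u)"
    by (simp add: A_def Z_def edge_def cross_eq algebra_simps)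
  have BZ_eq: "cross B Z = cross (edge vs (Suc u mod length vs)) (vtx vs k - vtx vs (Suc u mod length vs))"
    unfolding B_def Z_def by (metis edge_mod vtx_mod)
  have AZ: "cross A Z \<le> 0" using convex_cw_vertex_right_le[OF cv uN kN] AZ_eq by simp
  have BZ: "cross B Z \<le> 0"
    using convex_cw_vertex_right_le[OF cv mod_less_divisor kN, of "Suc u"] uN BZ_eq
    by (metis gr_zeroI less_nat_zero_code)
  have strict: "cross A Z < 0 \<or> cross B Z < 0"
    using vertex_strictly_right_of_corner[OF cv uN kN k] AZ_eq
    by (simp add: A_def B_def Z_def edge_def)
  \<comment> \<open>expansion of Z in the basis A, B, tested against d\<close>
  have id: "cross A B * cross d Z = cross Z B * cross d A + cross A Z * cross d B"
    by (simp add: cross_eq algebra_simps)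
  have dA: "cross d A > 0" and dB: "cross d B < 0"
    using din dout cross_antisym[of d A] cross_antisym[of d B] by (simp_all add: A_def B_def)
  have "cross Z B * cross d A \<ge> 0" using BZ dA cross_antisym[of Z B] by (simp add: mult_nonpos_nonneg)
  moreover have "cross A Z * cross d B \<ge> 0" using AZ dB by (simp add: mult_nonpos_nonpos)
  moreover have "cross Z B * cross d A > 0 \<or> cross A Z * cross d B > 0"
    using strict dA dB cross_antisym[of Z B] by (auto simp: mult_neg_neg mult_neg_pos)
  ultimately have "cross A B * cross d Z > 0" using id by linarith
  moreover have "cross A B < 0" using convex_turn_right[OF cv uN] A_def B_def by simp
  ultimately show ?thesis unfolding Z_def by (simp add: zero_less_mult_iff)
qed

lemma corner_determined_by_direction:
  assumes cv: "convex_cw_polygon vs" and uN: "u < length vs" and wN: "w < length vs"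
    and "cross (edge vs u) d < 0" "cross (edge vs (Suc u)) d > 0"
    and "cross (edge vs w) d < 0" "cross (edge vs (Suc w)) d > 0"
  shows "u = w"
proof (rule ccontr)
  let ?N = "length vs"
  have N0: "0 < ?N" using uN by linarith
  assume "u \<noteq> w"
  hence ne: "Suc w mod ?N \<noteq> Suc u mod ?N" using Suc_mod_inj uN wN by metis
  have "cross d (vtx vs (Suc w mod ?N) - vtx vs (Suc u)) < 0"
    using vertex_left_of_corner_direction[OF cv uN mod_less_divisor[OF N0] ne assms(4,5)] .
  moreover have "cross d (vtx vs (Suc u mod ?N) - vtx vs (Suc w)) < 0"
    using vertex_left_of_corner_direction[OF cv wN mod_less_divisor[OF N0] ne[symmetric] assms(6,7)] .
  ultimately show False by (simp add: vtx_mod cross_diff_right)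
qed

text \<open>With A, X the sides of an obtuse or right corner turning right, and X, C those of a
second such corner in which X is traversed backwards, no direction d can cross A inwards
and both X and C outwards: the two angle conditions force the component of d along X
to have opposite signs.\<close>

lemma obtuse_corners_not_crossed:
  assumes "dotc A X \<ge> 0" "dotc C X \<le> 0" "cross A X * cross C X > 0"
    "cross A d < 0" "cross X d > 0" "cross C d > 0"
  shows False
proof -
  have "X \<noteq> 0" using assms(5) by (auto simp: cross_eq)
  hence X0: "dotc X X > 0" by (simp add: dotc_eq complex_eq_iff sum_squares_gt_zero_iff)
  have id1: "dotc X X * cross A d = dotc A X * cross X d + cross A X * dotc X d"
    by (simp add: dotc_eq cross_eq algebra_simps)
  have id2: "dotc X X * cross C d = dotc C X * cross X d + cross C X * dotc X d"
    by (simp add: dotc_eq cross_eq algebra_simps)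
  have "dotc X X * cross A d < 0" using X0 assms(4) by (simp add: mult_pos_neg)
  moreover have "dotc A X * cross X d \<ge> 0" using assms(1,5) by simp
  ultimately have p1: "cross A X * dotc X d < 0" using id1 by linarith
  have "dotc X X * cross C d > 0" using X0 assms(6) by simp
  moreover have "dotc C X * cross X d \<le> 0" using assms(2,5) by (simp add: mult_nonpos_nonneg)
  ultimately have p2: "cross C X * dotc X d > 0" using id2 by linarith
  have "(cross A X * cross C X) * (dotc X d)\<^sup>2 = (cross A X * dotc X d) * (cross C X * dotc X d)"
    by (simp add: power2_eq_square algebra_simps)
  also have "\<dots> < 0" using p1 p2 by (simp add: mult_neg_pos)
  finally show False using assms(3) by (smt (verit) zero_le_power2 mult_nonneg_nonneg)
qed

lemma no_consecutive_right_corners: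
  assumes p: "convex_cw_polygon p" "angles_obtuse_or_right p" and uN: "u < length p"
    and q: "convex_cw_polygon q" "angles_obtuse_or_right q" and yN: "y < length q"
    and glued: "edge q y = - edge p (Suc u)"
    and "cross (edge p u) d < 0" "cross (edge p (Suc u)) d > 0" "cross (edge q (Suc y)) d > 0"
  shows False
proof (rule obtuse_corners_not_crossed)
  show "0 \<le> dotc (edge p u) (edge p (Suc u))" using obtuse_turn[OF p uN] .
  show "dotc (edge q (Suc y)) (edge p (Suc u)) \<le> 0"
    using obtuse_turn[OF q yN] glued unfolding dotc_eq by (simp add: algebra_simps)
  have "cross (edge p u) (edge p (Suc u)) < 0" using convex_turn_right[OF p(1) uN] .
  moreover have "cross (edge q (Suc y)) (edge p (Suc u)) < 0"
    using convex_turn_right[OF q(1) yN] glued unfolding cross_eq by (simp add: algebra_simps)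
  ultimately show "0 < cross (edge p u) (edge p (Suc u)) * cross (edge q (Suc y)) (edge p (Suc u))"
    by (simp add: mult_neg_neg)
qed (use assms in auto)

lemma glue_map_open_side:
  assumes "translation_surface_P1P2 polys glue" "is_side_idx polys s"
    "z \<in> open_side (polys ! fst s) (snd s)"
  shows "glue_map polys glue s z \<in> open_side (polys ! fst (glue s)) (snd (glue s))"
proof -
  let ?q = "polys ! fst (glue s)" and ?j = "snd (glue s)" and ?p = "polys ! fst s" and ?u = "snd s"
  have E: "edge ?q ?j = - edge ?p ?u"
    using assms(1,2) unfolding translation_surface_P1P2_def by blast
  obtain t where t: "0 < t" "t < 1" "z = vtx ?p ?u + of_real t * edge ?p ?u" "edge ?p ?u \<noteq> 0"
    using open_side_param[OF assms(3)] by blast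
  have E2: "vtx ?q (Suc ?j) = vtx ?q ?j - edge ?p ?u"
    using E unfolding edge_def by (simp add: algebra_simps)
  have "glue_map polys glue s z = (1 - t) *\<^sub>R vtx ?q (Suc ?j) + t *\<^sub>R vtx ?q ?j"
    unfolding glue_map_def t(3) E2 by (simp add: scaleR_conv_of_real algebra_simps)
  moreover have "vtx ?q (Suc ?j) \<noteq> vtx ?q ?j" using E t(4) by (auto simp: edge_def)
  ultimately have "glue_map polys glue s z \<in> open_segment (vtx ?q (Suc ?j)) (vtx ?q ?j)"
    unfolding in_segment(2) using t by blast
  thus ?thesis unfolding open_side_def by (simp add: open_segment_commute)
qed


section \<open>The polygonal decomposition of a saddle connection\<close>

locale polygonal_decomposition =
  fixes polys :: "complex list list" and glue :: "nat \<times> nat \<Rightarrow> nat \<times> nat"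
    and segs :: "(nat \<times> complex \<times> complex) list"
  assumes surface: "translation_surface_P1P2 polys glue"
    and transversal: "transversal_saddle_connection polys glue segs"
begin

abbreviation pid :: "nat \<Rightarrow> nat" where "pid t \<equiv> fst (segs ! t)"
abbreviation src :: "nat \<Rightarrow> complex" where "src t \<equiv> fst (snd (segs ! t))"
abbreviation dst :: "nat \<Rightarrow> complex" where "dst t \<equiv> snd (snd (segs ! t))"
abbreviation pgon :: "nat \<Rightarrow> complex list" where "pgon t \<equiv> polys ! pid t"
abbreviation adjacent :: "nat \<Rightarrow> bool" where "adjacent t \<equiv> adjacent_seg polys segs t"
abbreviation positive :: "nat \<Rightarrow> bool" where "positive t \<equiv> adj_pos polys segs t"
abbreviation negative :: "nat \<Rightarrow> bool" where "negative t \<equiv> adj_neg polys segs t"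

definition direction :: complex where
  "direction = dst 0 - src 0"

text \<open>All segments are parallel to direction, so level t determines the line carrying
segment t; it is the transverse coordinate that the gluings shift.\<close>

definition level :: "nat \<Rightarrow> real" where
  "level t = cross direction (src t)"

definition entry_side :: "nat \<Rightarrow> nat" where
  "entry_side t = (THE u. u < length (pgon t) \<and> src t \<in> open_side (pgon t) u)"

definition exit_side :: "nat \<Rightarrow> nat" where
  "exit_side t = (THE u. u < length (pgon t) \<and> dst t \<in> open_side (pgon t) u)"

definition glue_shift :: "nat \<times> nat \<Rightarrow> real" where
  "glue_shift s = cross direction
     (vtx (polys ! fst (glue s)) (Suc (snd (glue s))) - vtx (polys ! fst s) (snd s))"

lemma segs_nonempty: "segs \<noteq> []"
  using transversal unfolding transversal_saddle_connection_def by blast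

lemma segment_props:
  assumes "t < length segs"
  shows "pid t < length polys" "src t \<noteq> dst t"
    "open_segment (src t) (dst t) \<subseteq> poly_interior (pgon t)"
  using transversal assms unfolding transversal_saddle_connection_def by blast+

lemma pgon_props:
  assumes "t < length segs"
  shows "convex_cw_polygon (pgon t)" "angles_obtuse_or_right (pgon t)"
  using surface segment_props(1)[OF assms] unfolding translation_surface_P1P2_def by auto

lemma glue_props:
  assumes "p < length polys" "u < length (polys ! p)"
  shows "fst (glue (p, u)) < length polys" "snd (glue (p, u)) < length (polys ! fst (glue (p, u)))"
    "glue (glue (p, u)) = (p, u)"
    "edge (polys ! fst (glue (p, u))) (snd (glue (p, u))) = - edge (polys ! p) u"
  using surface assms unfolding translation_surface_P1P2_def is_side_idx_def by auto

lemma consecutive_segments: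
  assumes "Suc t < length segs"
  shows "\<exists>c>0. dst (Suc t) - src (Suc t) = of_real c * (dst t - src t)"
    "\<exists>u<length (pgon t). dst t \<in> open_side (pgon t) u \<and> fst (glue (pid t, u)) = pid (Suc t) \<and>
        src (Suc t) = glue_map polys glue (pid t, u) (dst t)"
proof -
  have "let (p, a, b) = segs ! t; (q, a', b') = segs ! Suc t in
          (\<exists>c > 0. b' - a' = of_real c * (b - a)) \<and>
          (\<exists>u < length (polys ! p). b \<in> open_side (polys ! p) u \<and>
              fst (glue (p, u)) = q \<and> a' = glue_map polys glue (p, u) b)"
    using transversal assms unfolding transversal_saddle_connection_def by blast
  thus "\<exists>c>0. dst (Suc t) - src (Suc t) = of_real c * (dst t - src t)"
    "\<exists>u<length (pgon t). dst t \<in> open_side (pgon t) u \<and> fst (glue (pid t, u)) = pid (Suc t) \<and>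
        src (Suc t) = glue_map polys glue (pid t, u) (dst t)"
    by (simp_all add: Let_def split_beta)
qed

lemma first_src_vertex: "src 0 \<in> set (pgon 0)"
  using transversal segs_nonempty unfolding transversal_saddle_connection_def is_vertex_def
  by (simp add: hd_conv_nth)

lemma last_dst_vertex: "dst (length segs - 1) \<in> set (pgon (length segs - 1))"
  using transversal segs_nonempty unfolding transversal_saddle_connection_def is_vertex_def
  by (simp add: last_conv_nth)

lemma segment_direction: "t < length segs \<Longrightarrow> \<exists>c>0. dst t - src t = of_real c * direction"
proof (induction t)
  case 0
  then show ?case by (intro exI[of _ 1]) (simp add: direction_def)
next
  case (Suc t)
  obtain c where "c > 0" "dst t - src t = of_real c * direction"
    using Suc by auto
  moreover obtain c' where "c' > 0" "dst (Suc t) - src (Suc t) = of_real c' * (dst t - src t)"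
    using consecutive_segments(1)[OF Suc.prems] by blast
  ultimately show ?case by (intro exI[of _ "c' * c"]) simp
qed

lemma level_dst: "t < length segs \<Longrightarrow> cross direction (dst t) = level t"
proof -
  assume "t < length segs"
  then obtain c where "dst t = src t + of_real c * direction"
    using segment_direction by (auto simp: algebra_simps)
  thus ?thesis by (simp add: level_def cross_add_right cross_of_real_mult_right)
qed

lemma entry_cross_direction:
  assumes "t < length segs" "u < length (pgon t)" "src t \<in> open_side (pgon t) u"
  shows "cross (edge (pgon t) u) direction < 0"
proof -
  obtain c where "c > 0" "dst t - src t = of_real c * direction"
    using segment_direction[OF assms(1)] by blast
  with entry_cross_neg[OF segment_props(2,3)[OF assms(1)] assms(2,3)] show ?thesis
    by (simp add: cross_of_real_mult_right mult_less_0_iff)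
qed

lemma exit_cross_direction:
  assumes "t < length segs" "x < length (pgon t)" "dst t \<in> open_side (pgon t) x"
  shows "cross (edge (pgon t) x) direction > 0"
proof -
  obtain c where "c > 0" "dst t - src t = of_real c * direction"
    using segment_direction[OF assms(1)] by blast
  with exit_cross_pos[OF segment_props(2,3)[OF assms(1)] assms(2,3)] show ?thesis
    by (simp add: cross_of_real_mult_right zero_less_mult_iff)
qed

lemma entry_side_eq:
  "t < length segs \<Longrightarrow> u < length (pgon t) \<Longrightarrow> src t \<in> open_side (pgon t) u \<Longrightarrow> entry_side t = u"
  unfolding entry_side_def by (rule the_equality) (auto intro: open_side_unique[OF pgon_props(1)])

lemma exit_side_eq:
  "t < length segs \<Longrightarrow> u < length (pgon t) \<Longrightarrow> dst t \<in> open_side (pgon t) u \<Longrightarrow> exit_side t = u"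
  unfolding exit_side_def by (rule the_equality) (auto intro: open_side_unique[OF pgon_props(1)])

lemma glue_step:
  assumes st: "Suc t < length segs"
  shows "exit_side t < length (pgon t)" "dst t \<in> open_side (pgon t) (exit_side t)"
    "glue (pid t, exit_side t) = (pid (Suc t), entry_side (Suc t))"
    "entry_side (Suc t) < length (pgon (Suc t))"
    "src (Suc t) \<in> open_side (pgon (Suc t)) (entry_side (Suc t))"
    "level (Suc t) = level t + glue_shift (pid t, exit_side t)"
proof -
  have t: "t < length segs" using st by simp
  obtain u where u: "u < length (pgon t)" "dst t \<in> open_side (pgon t) u"
    "fst (glue (pid t, u)) = pid (Suc t)" "src (Suc t) = glue_map polys glue (pid t, u) (dst t)"
    using consecutive_segments(2)[OF st] by blast
  have ex: "exit_side t = u" using exit_side_eq[OF t u(1,2)] .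
  show "exit_side t < length (pgon t)" "dst t \<in> open_side (pgon t) (exit_side t)"
    using u ex by auto
  have "is_side_idx polys (pid t, u)"
    using segment_props(1)[OF t] u(1) by (simp add: is_side_idx_def)
  hence src: "src (Suc t) \<in> open_side (pgon (Suc t)) (snd (glue (pid t, u)))"
    using glue_map_open_side[OF surface, of "(pid t, u)" "dst t"] u by simp
  have len: "snd (glue (pid t, u)) < length (pgon (Suc t))"
    using glue_props(2)[OF segment_props(1)[OF t] u(1)] u(3) by simp
  have en: "entry_side (Suc t) = snd (glue (pid t, u))" using entry_side_eq[OF st len src] .
  show "glue (pid t, exit_side t) = (pid (Suc t), entry_side (Suc t))"
    using ex en u(3) by (simp add: prod_eq_iff)
  show "entry_side (Suc t) < length (pgon (Suc t))"
    "src (Suc t) \<in> open_side (pgon (Suc t)) (entry_side (Suc t))"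
    using en len src by auto
  show "level (Suc t) = level t + glue_shift (pid t, exit_side t)"
    unfolding level_def glue_shift_def ex u(4) glue_map_def
    using level_dst[OF t] by (simp add: level_def cross_add_right cross_diff_right)
qed

lemma glue_step_back:
  assumes "Suc t < length segs"
  shows "glue (pid (Suc t), entry_side (Suc t)) = (pid t, exit_side t)"
  using glue_step(3)[OF assms] glue_props(3)[OF segment_props(1) glue_step(1)[OF assms]] assms
  by (metis Suc_lessD)

lemma glued_edges:
  assumes st: "Suc t < length segs"
  shows "edge (pgon (Suc t)) (entry_side (Suc t)) = - edge (pgon t) (exit_side t)"
  using glue_props(4)[OF segment_props(1) glue_step(1)[OF st]] glue_step(3)[OF st] st by simp

lemma dst_on_boundary:
  assumes "t < length segs"
  shows "on_boundary (pgon t) (dst t)"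
proof (cases "Suc t < length segs")
  case True
  then show ?thesis using glue_step(1,2) unfolding on_boundary_def by blast
next
  case False
  hence "t = length segs - 1" using assms by simp
  then show ?thesis using last_dst_vertex unfolding on_boundary_def by simp
qed

lemma src_on_boundary:
  assumes "t < length segs"
  shows "on_boundary (pgon t) (src t)"
proof (cases t)
  case 0
  then show ?thesis using first_src_vertex unfolding on_boundary_def by simp
next
  case (Suc t')
  then show ?thesis using glue_step(4,5)[of t'] assms unfolding on_boundary_def by blast
qed

lemma pgon_length: "t < length segs \<Longrightarrow> 3 \<le> length (pgon t)"
  using pgon_props(1) convex_cw_polygon_length by blast

lemma positive_corner:
  assumes "positive t"
  shows "t < length segs" "entry_side t < length (pgon t)" "exit_side t < length (pgon t)"
    "src t \<in> open_side (pgon t) (entry_side t)" "dst t \<in> open_side (pgon t) (exit_side t)"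
    "Suc (entry_side t) mod length (pgon t) = exit_side t"
proof -
  obtain u where u: "t < length segs" "u < length (pgon t)" "src t \<in> open_side (pgon t) u"
    "dst t \<in> open_side (pgon t) (Suc u mod length (pgon t))"
    using assms unfolding adj_pos_def by (auto simp: Let_def split_beta)
  have x: "Suc u mod length (pgon t) < length (pgon t)" using u(2) by (intro mod_less_divisor) linarith
  show "t < length segs" "entry_side t < length (pgon t)" "exit_side t < length (pgon t)"
    "src t \<in> open_side (pgon t) (entry_side t)" "dst t \<in> open_side (pgon t) (exit_side t)"
    "Suc (entry_side t) mod length (pgon t) = exit_side t"
    using u x entry_side_eq[OF u(1-3)] exit_side_eq[OF u(1) x u(4)] by auto
qed

lemma negative_corner:
  assumes "negative t"
  shows "t < length segs" "entry_side t < length (pgon t)" "exit_side t < length (pgon t)"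
    "src t \<in> open_side (pgon t) (entry_side t)" "dst t \<in> open_side (pgon t) (exit_side t)"
    "Suc (exit_side t) mod length (pgon t) = entry_side t"
proof -
  obtain u where u: "t < length segs" "u < length (pgon t)" "src t \<in> open_side (pgon t) u"
    "dst t \<in> open_side (pgon t) ((u + length (pgon t) - 1) mod length (pgon t))"
    using assms unfolding adj_neg_def by (auto simp: Let_def split_beta)
  have x: "(u + length (pgon t) - 1) mod length (pgon t) < length (pgon t)"
    using u(2) by (intro mod_less_divisor) linarith
  show "t < length segs" "entry_side t < length (pgon t)" "exit_side t < length (pgon t)"
    "src t \<in> open_side (pgon t) (entry_side t)" "dst t \<in> open_side (pgon t) (exit_side t)"
    "Suc (exit_side t) mod length (pgon t) = entry_side t"
    using u x entry_side_eq[OF u(1-3)] exit_side_eq[OF u(1) x u(4)] Suc_mod_pred[OF u(2)] by auto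
qed

lemma adjacent_corner:
  assumes "adjacent t"
  shows "t < length segs" "entry_side t < length (pgon t)" "exit_side t < length (pgon t)"
    "src t \<in> open_side (pgon t) (entry_side t)" "dst t \<in> open_side (pgon t) (exit_side t)"
  using assms positive_corner negative_corner unfolding adjacent_seg_def by blast+

lemma positive_not_negative:
  assumes p: "positive t"
  shows "\<not> negative t"
proof
  assume n: "negative t"
  have "Suc (Suc (entry_side t)) mod length (pgon t) = entry_side t"
    using positive_corner(6)[OF p] negative_corner(6)[OF n] by (metis mod_Suc_eq)
  then show False
    using Suc_Suc_mod_neq(2)[OF pgon_length positive_corner(2)] positive_corner(1) p by blast
qed

lemma adjacent_not_first: "adjacent t \<Longrightarrow> t \<noteq> 0"
  using open_side_not_vertex[OF pgon_props(1) adjacent_corner(2,4)] first_src_vertex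
  by (metis adjacent_corner(1))

lemma adjacent_not_last:
  assumes adj: "adjacent t"
  shows "Suc t < length segs"
proof (rule ccontr)
  assume "\<not> Suc t < length segs"
  hence "t = length segs - 1" using adjacent_corner(1)[OF adj] by simp
  then show False
    using open_side_not_vertex[OF pgon_props(1) adjacent_corner(3,5)] adj last_dst_vertex
    by (metis adjacent_corner(1))
qed

lemma adjacent_if_same_sides:
  assumes adj: "adjacent t" and e: "e < length segs" and p: "pid e = pid t"
    and sides: "src e \<in> open_side (pgon t) (entry_side t)" "dst e \<in> open_side (pgon t) (exit_side t)"
  shows "adjacent e"
  using adj unfolding adjacent_seg_def
proof
  assume "positive t"
  then show "positive e \<or> negative e"
    using positive_corner[of t] e p sides unfolding adj_pos_def by (auto simp: Let_def split_beta)
next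
  assume n: "negative t"
  let ?N = "length (pgon t)"
  have "exit_side t = (entry_side t + ?N - 1) mod ?N"
    using mod_pred_Suc_mod[OF negative_corner(3)[OF n]] negative_corner(6)[OF n] by simp
  then show "positive e \<or> negative e"
    using negative_corner[OF n] e p sides unfolding adj_neg_def by (auto simp: Let_def split_beta)
qed

text \<open>The negative case is the positive one for the reversed segments, with direction
negated.\<close>

lemma adjacent_signs_alternate:
  assumes st: "Suc t < length segs" and "adjacent t" "adjacent (Suc t)"
  shows "positive (Suc t) \<longleftrightarrow> \<not> positive t"
proof -
  have t: "t < length segs" using st by simp
  let ?d = direction and ?p = "pgon t" and ?q = "pgon (Suc t)"
  have glued: "edge ?q (entry_side (Suc t)) = - edge ?p (exit_side t)"
    using glued_edges[OF st] .
  have not_pos: False if pt: "positive t" and ps: "positive (Suc t)"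
  proof (rule no_consecutive_right_corners[OF pgon_props[OF t] positive_corner(2)[OF pt]
        pgon_props[OF st] positive_corner(2)[OF ps]])
    show "edge ?q (entry_side (Suc t)) = - edge ?p (Suc (entry_side t))"
      using glued positive_corner(6)[OF pt] by (metis edge_mod)
    show "cross (edge ?p (entry_side t)) ?d < 0"
      using entry_cross_direction[OF t positive_corner(2,4)[OF pt]] .
    show "cross (edge ?p (Suc (entry_side t))) ?d > 0"
      using exit_cross_direction[OF t positive_corner(3,5)[OF pt]] positive_corner(6)[OF pt]
      by (metis edge_mod)
    show "cross (edge ?q (Suc (entry_side (Suc t)))) ?d > 0"
      using exit_cross_direction[OF st positive_corner(3,5)[OF ps]] positive_corner(6)[OF ps]
      by (metis edge_mod)
  qed
  have not_neg: False if nt: "negative t" and ns: "negative (Suc t)"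
  proof (rule no_consecutive_right_corners[OF pgon_props[OF st] negative_corner(3)[OF ns]
        pgon_props[OF t] negative_corner(3)[OF nt], where d = "- ?d"])
    show "edge ?p (exit_side t) = - edge ?q (Suc (exit_side (Suc t)))"
      using glued negative_corner(6)[OF ns] by (metis edge_mod minus_minus)
    show "cross (edge ?q (exit_side (Suc t))) (- ?d) < 0"
      using exit_cross_direction[OF st negative_corner(3,5)[OF ns]] by (simp add: cross_minus_right)
    show "cross (edge ?q (Suc (exit_side (Suc t)))) (- ?d) > 0"
      using entry_cross_direction[OF st negative_corner(2,4)[OF ns]] negative_corner(6)[OF ns]
      by (metis edge_mod cross_minus_right neg_0_less_iff_less)
    show "cross (edge ?p (Suc (exit_side t))) (- ?d) > 0"
      using entry_cross_direction[OF t negative_corner(2,4)[OF nt]] negative_corner(6)[OF nt]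
      by (metis edge_mod cross_minus_right neg_0_less_iff_less)
  qed
  show ?thesis using assms(2,3) not_pos not_neg unfolding adjacent_seg_def by blast
qed

lemma positive_same_sides:
  assumes t: "positive t" and t': "positive t'" and p: "pid t = pid t'"
  shows "entry_side t = entry_side t' \<and> exit_side t = exit_side t'"
proof -
  note I = positive_corner[OF t] and I' = positive_corner[OF t']
  have "entry_side t = entry_side t'"
  proof (rule corner_determined_by_direction[OF pgon_props(1)[OF I(1)] I(2)])
    show "entry_side t' < length (pgon t)" using I'(2) p by simp
    show "cross (edge (pgon t) (entry_side t)) direction < 0"
      "cross (edge (pgon t) (entry_side t')) direction < 0"
      using entry_cross_direction[OF I(1,2,4)] entry_cross_direction[OF I'(1,2,4)] p by simp_all
    show "cross (edge (pgon t) (Suc (entry_side t))) direction > 0"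
      "cross (edge (pgon t) (Suc (entry_side t'))) direction > 0"
      using exit_cross_direction[OF I(1,3,5)] exit_cross_direction[OF I'(1,3,5)] I(6) I'(6) p
      by (metis edge_mod)+
  qed
  then show ?thesis using I(6) I'(6) p by simp
qed

lemma negative_same_sides:
  assumes t: "negative t" and t': "negative t'" and p: "pid t = pid t'"
  shows "entry_side t = entry_side t' \<and> exit_side t = exit_side t'"
proof -
  note I = negative_corner[OF t] and I' = negative_corner[OF t']
  have "exit_side t = exit_side t'"
  proof (rule corner_determined_by_direction[OF pgon_props(1)[OF I(1)] I(3), where d = "- direction"])
    show "exit_side t' < length (pgon t)" using I'(3) p by simp
    show "cross (edge (pgon t) (exit_side t)) (- direction) < 0"
      "cross (edge (pgon t) (exit_side t')) (- direction) < 0"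
      using exit_cross_direction[OF I(1,3,5)] exit_cross_direction[OF I'(1,3,5)] p
      by (simp_all add: cross_minus_right)
    show "cross (edge (pgon t) (Suc (exit_side t))) (- direction) > 0"
      "cross (edge (pgon t) (Suc (exit_side t'))) (- direction) > 0"
      using entry_cross_direction[OF I(1,2,4)] entry_cross_direction[OF I'(1,2,4)] I(6) I'(6) p
      by (metis edge_mod cross_minus_right neg_0_less_iff_less)+
  qed
  then show ?thesis using I(6) I'(6) p by simp
qed

lemma same_sign_entry_iff_exit:
  assumes adj: "adjacent t" "adjacent t'" and p: "pid t = pid t'"
    and sign: "positive t \<longleftrightarrow> positive t'"
  shows "entry_side t = entry_side t' \<longleftrightarrow> exit_side t = exit_side t'"
proof (cases "positive t")
  case True
  hence pt: "positive t" and pt': "positive t'" using sign by auto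
  have "exit_side t = exit_side t' \<Longrightarrow> entry_side t = entry_side t'"
    using Suc_mod_inj[OF positive_corner(2)[OF pt], of "entry_side t'"]
      positive_corner(2,6)[OF pt'] positive_corner(6)[OF pt] p by simp
  then show ?thesis using positive_corner(6)[OF pt] positive_corner(6)[OF pt'] p by auto
next
  case False
  hence nt: "negative t" and nt': "negative t'"
    using sign adj unfolding adjacent_seg_def by auto
  have "entry_side t = entry_side t' \<Longrightarrow> exit_side t = exit_side t'"
    using Suc_mod_inj[OF negative_corner(3)[OF nt], of "exit_side t'"]
      negative_corner(3,6)[OF nt'] negative_corner(6)[OF nt] p by simp
  then show ?thesis using negative_corner(6)[OF nt] negative_corner(6)[OF nt'] p by auto
qed

lemma run_sign_parity:
  assumes run: "\<forall>m\<in>{i..j}. adjacent m" and it: "i \<le> t" and tj: "t \<le> j"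
  shows "positive t \<longleftrightarrow> (positive i \<longleftrightarrow> even (t - i))"
  using it tj
proof (induction t rule: dec_induct)
  case base
  then show ?case by simp
next
  case (step n)
  have adj: "adjacent n" "adjacent (Suc n)" using run step by auto
  have "positive (Suc n) \<longleftrightarrow> \<not> positive n"
    using adjacent_signs_alternate[OF adjacent_not_last[OF adj(1)] adj] .
  then show ?case using step by (simp add: Suc_diff_le)
qed

definition shifted_copy :: "nat \<Rightarrow> real \<Rightarrow> nat \<Rightarrow> bool" where
  "shifted_copy k D s \<longleftrightarrow> pid (s + k) = pid s \<and> entry_side (s + k) = entry_side s \<and>
     exit_side (s + k) = exit_side s \<and> level (s + k) = level s + D"

lemma shifted_copy_Suc:
  assumes copy: "shifted_copy k D s" and e: "Suc (s + k) < length segs"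
    and adj: "adjacent (Suc s)" "adjacent (Suc s + k)"
    and sign: "positive (Suc s) \<longleftrightarrow> positive (Suc s + k)"
  shows "shifted_copy k D (Suc s)"
proof -
  have st: "Suc s < length segs" using e by simp
  have p: "pid (Suc s + k) = pid (Suc s)" and en: "entry_side (Suc s + k) = entry_side (Suc s)"
    using glue_step(3)[OF st] glue_step(3)[OF e] copy by (simp_all add: shifted_copy_def)
  moreover have "exit_side (Suc s + k) = exit_side (Suc s)"
    using same_sign_entry_iff_exit[OF adj(2,1) p] sign en by simp
  moreover have "level (Suc s + k) = level (Suc s) + D"
    using glue_step(6)[OF st] glue_step(6)[OF e] copy by (simp add: shifted_copy_def)
  ultimately show ?thesis unfolding shifted_copy_def by simp
qed

lemma shifted_copy_pred:
  assumes copy: "shifted_copy k D (Suc s)" and e: "Suc (s + k) < length segs"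
    and adj: "adjacent s" "adjacent (s + k)" and sign: "positive s \<longleftrightarrow> positive (s + k)"
  shows "shifted_copy k D s"
proof -
  have st: "Suc s < length segs" using e by simp
  have p: "pid (s + k) = pid s" and ex: "exit_side (s + k) = exit_side s"
    using glue_step_back[OF st] glue_step_back[OF e] copy by (simp_all add: shifted_copy_def)
  moreover have "entry_side (s + k) = entry_side s"
    using same_sign_entry_iff_exit[OF adj(2,1) p] sign ex by simp
  moreover have "level (s + k) = level s + D"
    using glue_step(6)[OF st] glue_step(6)[OF e] copy p ex by (simp add: shifted_copy_def)
  ultimately show ?thesis unfolding shifted_copy_def by simp
qed

text \<open>Gluings and corners are determined by the sides crossed, so a single shifted copy
inside a run propagates, in both directions, along the whole run.\<close>

lemma run_shifted_copies:
  assumes run: "\<forall>m\<in>{i..j}. adjacent m" and k: "even k"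
    and m: "i \<le> m" "m + k \<le> j" and copy: "shifted_copy k D m"
    and s: "i \<le> s" "s + k \<le> j"
  shows "shifted_copy k D s"
proof -
  have same_sign: "positive t \<longleftrightarrow> positive (t + k)" if "i \<le> t" "t + k \<le> j" for t
  proof -
    have "t + k - i = (t - i) + k" using that(1) by simp
    then show ?thesis
      using run_sign_parity[OF run that(1)] run_sign_parity[OF run, of "t + k"] that k by simp
  qed
  have len: "j < length segs" using run m adjacent_corner(1) by auto
  show ?thesis
  proof (cases "m \<le> s")
    case True
    from True s(2) show ?thesis
    proof (induction s rule: dec_induct)
      case base
      show ?case using copy by simp
    next
      case (step n)
      show ?case
        using shifted_copy_Suc[OF step.IH] same_sign[of "Suc n"] run m step len by simp
    qed
  next
    case False
    hence "s \<le> m" by simp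
    from this s(1) show ?thesis
    proof (induction s rule: inc_induct)
      case base
      show ?case using copy by simp
    next
      case (step n)
      show ?case
        using shifted_copy_pred[OF step.IH] same_sign[of n] run m step len by simp
    qed
  qed
qed

lemma shifted_copy_exit:
  assumes copy: "shifted_copy k D t" and e: "Suc (t + k) < length segs"
    and adj: "adjacent (Suc t)" and nadj: "\<not> adjacent (Suc (t + k))"
  shows "positive (Suc t) \<Longrightarrow> D < 0" and "\<not> positive (Suc t) \<Longrightarrow> 0 < D"
proof -
  let ?e = "Suc (t + k)" and ?t = "Suc t"
  let ?vs = "pgon ?t" and ?u = "entry_side ?t" and ?x = "exit_side ?t"
  have st: "Suc t < length segs" using e by simp
  have p: "pid ?e = pid ?t" and en: "entry_side ?e = ?u"
    using glue_step(3)[OF st] glue_step(3)[OF e] copy by (simp_all add: shifted_copy_def)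
  have lvl: "level ?e = level ?t + D"
    using glue_step(6)[OF st] glue_step(6)[OF e] copy by (simp add: shifted_copy_def)
  note I = adjacent_corner[OF adj]
  have a: "src ?e \<in> open_side ?vs ?u" using glue_step(5)[OF e] p en by simp
  have nb: "dst ?e \<notin> open_side ?vs ?x" using adjacent_if_same_sides[OF adj e p a] nadj by blast
  have seg: "src ?e \<noteq> dst ?e" "open_segment (src ?e) (dst ?e) \<subseteq> poly_interior ?vs"
    using segment_props(2,3)[OF e] p by simp_all
  have bd: "on_boundary ?vs (dst ?e)" using dst_on_boundary[OF e] p by simp
  obtain c where c: "dst ?e - src ?e = of_real c * direction" "0 < c"
    using segment_direction[OF e] by blast
  have din: "cross (edge ?vs ?u) direction < 0" using entry_cross_direction[OF I(1,2,4)] .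
  have dout: "cross (edge ?vs ?x) direction > 0" using exit_cross_direction[OF I(1,3,5)] .
  have cv: "convex_cw_polygon ?vs" using pgon_props(1)[OF I(1)] .
  have lvl_t: "cross direction (dst ?t) = level ?t" using level_dst[OF I(1)] .
  show "D < 0" if pos: "positive ?t"
    using corner_miss_below[OF cv I(2) positive_corner(6)[OF pos] din dout I(5) seg a bd nb c]
      lvl lvl_t by (simp add: level_def)
  show "0 < D" if neg: "\<not> positive ?t"
  proof -
    have "negative ?t" using adj neg unfolding adjacent_seg_def by blast
    then show ?thesis
      using corner_miss_above[OF cv I(2,3) negative_corner(6) din dout I(5) seg a bd nb c]
        lvl lvl_t by (simp add: level_def)
  qed
qed

lemma shifted_copy_entry:
  assumes copy: "shifted_copy k D (Suc t)" and e: "Suc (t + k) < length segs"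
    and adj: "adjacent (t + k)" and nadj: "\<not> adjacent t"
  shows "positive (t + k) \<Longrightarrow> 0 < D" and "\<not> positive (t + k) \<Longrightarrow> D < 0"
proof -
  let ?t = "t + k"
  let ?vs = "pgon ?t" and ?u = "entry_side ?t" and ?x = "exit_side ?t"
  have st: "Suc t < length segs" and t: "t < length segs" using e by simp_all
  have p: "pid t = pid ?t" and ex: "exit_side t = ?x"
    using glue_step_back[OF st] glue_step_back[OF e] copy by (simp_all add: shifted_copy_def)
  have lvl: "level ?t = level t + D"
    using glue_step(6)[OF st] glue_step(6)[OF e] copy p ex by (simp add: shifted_copy_def)
  note I = adjacent_corner[OF adj]
  have b: "dst t \<in> open_side ?vs ?x" using glue_step(2)[OF st] p ex by simp
  have na: "src t \<notin> open_side ?vs ?u" using adjacent_if_same_sides[OF adj t p _ b] nadj by blast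
  have seg: "dst t \<noteq> src t" "open_segment (dst t) (src t) \<subseteq> poly_interior ?vs"
    using segment_props(2,3)[OF t] p by (simp_all add: open_segment_commute)
  have bd: "on_boundary ?vs (src t)" using src_on_boundary[OF t] p by simp
  obtain c where "dst t - src t = of_real c * direction" and c: "0 < c"
    using segment_direction[OF t] by blast
  hence dir: "src t - dst t = of_real c * - direction" by (simp add: algebra_simps)
  have din: "cross (edge ?vs ?x) (- direction) < 0"
    using exit_cross_direction[OF I(1,3,5)] by (simp add: cross_minus_right)
  have dout: "cross (edge ?vs ?u) (- direction) > 0"
    using entry_cross_direction[OF I(1,2,4)] by (simp add: cross_minus_right)
  have cv: "convex_cw_polygon ?vs" using pgon_props(1)[OF I(1)] .
  have lvl_t: "cross direction (dst t) = level t" using level_dst[OF t] .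
  show "0 < D" if pos: "positive ?t"
    using corner_miss_above[OF cv I(3,2) positive_corner(6)[OF pos] din dout I(4) seg b bd na dir c]
      lvl lvl_t by (simp add: level_def cross_minus_left)
  show "D < 0" if neg: "\<not> positive ?t"
  proof -
    have "negative ?t" using adj neg unfolding adjacent_seg_def by blast
    then show ?thesis
      using corner_miss_below[OF cv I(3) negative_corner(6) din dout I(4) seg b bd na dir c]
        lvl lvl_t by (simp add: level_def cross_minus_left)
  qed
qed

theorem maximal_run_even:
  assumes run: "maximal_adjacent_run polys segs i j"
    and m: "i \<le> m1" "m1 < m2" "m2 \<le> j" and p: "pid m1 = pid m2"
    and sign: "(positive m1 \<and> positive m2) \<or> (negative m1 \<and> negative m2)"
  shows "even (j - i + 1)"
proof -
  have adj: "\<forall>m\<in>{i..j}. adjacent m" and ij: "i \<le> j" and j: "j < length segs"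
    using run unfolding maximal_adjacent_run_def by auto
  have i0: "0 < i" using adjacent_not_first adj ij by auto
  have sj: "Suc j < length segs" using adjacent_not_last adj ij by auto
  have ends: "\<not> adjacent (i - 1)" "\<not> adjacent (Suc j)"
    using run i0 sj unfolding maximal_adjacent_run_def by auto
  define k where "k = m2 - m1"
  define D where "D = level m2 - level m1"
  have "positive m1 \<longleftrightarrow> positive m2" using sign positive_not_negative by blast
  hence k: "even k" "0 < k" "m1 + k = m2" "i + k \<le> j"
    using run_sign_parity[OF adj m(1)] run_sign_parity[OF adj, of m2] m
    unfolding k_def by (auto simp: even_diff_nat)
  have "entry_side m1 = entry_side m2 \<and> exit_side m1 = exit_side m2"
    using positive_same_sides[OF _ _ p] negative_same_sides[OF _ _ p] sign by blast
  hence "shifted_copy k D m1"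
    using p k(3) unfolding shifted_copy_def D_def by auto
  hence copies: "shifted_copy k D s" if "i \<le> s" "s + k \<le> j" for s
    using run_shifted_copies[OF adj k(1) m(1)] k(3) m(3) that by simp
  have "positive (Suc (j - k)) \<longleftrightarrow> D < 0" "D \<noteq> 0"
    using shifted_copy_exit[OF copies, of "j - k"] sj ends(2) adj k by fastforce+
  moreover have "positive (i - 1 + k) \<longleftrightarrow> 0 < D"
    using shifted_copy_entry[OF copies, of "i - 1"] i0 sj ends(1) adj k by fastforce
  ultimately have "positive (Suc (j - k)) \<longleftrightarrow> \<not> positive (i - 1 + k)" by auto
  moreover have "even (i - 1 + k - i) \<longleftrightarrow> False" using k(1,2) i0 by simp
  ultimately have "even (Suc (j - k) - i)"
    using run_sign_parity[OF adj, of "Suc (j - k)"] run_sign_parity[OF adj, of "i - 1 + k"] k i0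
    by auto
  then show ?thesis using k by (simp add: even_diff_nat)
qed

end

theorem mainTheorem9:
  fixes polys :: "complex list list" and glue :: "nat \<times> nat \<Rightarrow> nat \<times> nat"
    and segs :: "(nat \<times> complex \<times> complex) list" and i j m1 m2 :: nat
  assumes "translation_surface_P1P2 polys glue"
    and "saddle_connection polys glue segs"
    and "\<not> is_side polys segs" and "\<not> is_diagonal polys segs"
    and "maximal_adjacent_run polys segs i j"
    and "m1 \<in> {i..j}" and "m2 \<in> {i..j}" and "m1 \<noteq> m2"
    and "fst (segs ! m1) = fst (segs ! m2)"
    and "(adj_pos polys segs m1 \<and> adj_pos polys segs m2) \<or>
         (adj_neg polys segs m1 \<and> adj_neg polys segs m2)"
  shows "even (j - i + 1)"
proof -
  have "transversal_saddle_connection polys glue segs"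
    using assms(2,3) unfolding saddle_connection_def by blast
  with assms(1) interpret polygonal_decomposition polys glue segs
    by unfold_locales
  from assms(8) consider "m1 < m2" | "m2 < m1" by linarith
  then show ?thesis
  proof cases
    case 1
    then show ?thesis using maximal_run_even[OF assms(5)] assms(6,7,9,10) by auto
  next
    case 2
    then show ?thesis using maximal_run_even[OF assms(5), of m2 m1] assms(6,7,9,10) by auto
  qed
qed

end
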